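(* For integers $n\ge1$ and $1\le k\le n$ define $X^{n,k}(z,\bar z)=\frac{1}{k!}\frac{\partial^{k-1}}{\partial z^{k-1}}\big[z^{n-k}(1-z\bar z)^k\big]$ ($z,\bar z$ treated as independent variables). Then $$\frac{\partial X^{n,k}}{\partial z}=Z^{n,k},\qquad \frac{\partial X^{n,k}}{\partial \bar z}=-Z^{n,k-1},\qquad X^{n,k}=\frac1k\big(Z^{n-1,k-1}-\bar z\,Z^{n,k-1}\big),$$ and $X^{n,k}(t,\bar t)=0$ for all $|t|=1$.
   Context: Identify $\mathbb R^2$ with $\mathbb C$ via $z=x^1+ix^2$, $\bar z=x^1-ix^2$, with Wirtinger derivatives $\frac{\partial}{\partial z}=\frac12\big(\frac{\partial}{\partial x^1}-i\frac{\partial}{\partial x^2}\big)$, $\frac{\partial}{\partial \bar z}=\frac12\big(\frac{\partial}{\partial x^1}+i\frac{\partial}{\partial x^2}\big)$. Zernike polynomials (in the paper's numbering) are defined for integers $n\ge 0$, $0\le k\le n$ by $$Z^{n,k}(z,\bar z)=\sum_{s=0}^{k}\binom{k}{s}\binom{n-k}{s}z^{n-k-s}(1-z\bar z)^s(-\bar z)^{k-s}\quad\text{for }0\le k\le [n/2],$$ and $Z^{n,k}=(-1)^n\,\overline{Z^{n,n-k}}$ for $[n/2]<k\le n$, where $[\cdot]$ is the integer part. *)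

theory Defs
  imports "HOL-Analysis.Analysis"
begin

text \<open>Zernike polynomials as polynomial functions of two independent complex
variables z and w, where w plays the role of the conjugate variable zbar.
The first branch is the explicit sum (valid for 0 <= k <= [n/2]).\<close>

definition zernike_low :: "nat \<Rightarrow> nat \<Rightarrow> complex \<Rightarrow> complex \<Rightarrow> complex" where
  "zernike_low n k z w =
     (\<Sum>s = 0..k. of_nat (k choose s) * of_nat ((n - k) choose s)
        * z ^ (n - k - s) * (1 - z * w) ^ s * (- w) ^ (k - s))"

text \<open>For [n/2] < k <= n: Z^{n,k} = (-1)^n conj(Z^{n,n-k}). Since the low-branch
polynomials have real (integer) coefficients, conjugation of the polynomial in
(z, zbar) amounts to swapping the two variables.\<close>

definition zernike :: "nat \<Rightarrow> nat \<Rightarrow> complex \<Rightarrow> complex \<Rightarrow> complex" where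
  "zernike n k z w =
     (if k \<le> n div 2 then zernike_low n k z w
      else (-1) ^ n * zernike_low n (n - k) w z)"

definition zernikeX :: "nat \<Rightarrow> nat \<Rightarrow> complex \<Rightarrow> complex \<Rightarrow> complex" where
  "zernikeX n k z w =
     (deriv ^^ (k - 1)) (\<lambda>\<zeta>. \<zeta> ^ (n - k) * (1 - \<zeta> * w) ^ k) z / of_nat (fact k)"

end

theory Submission
  imports Defs "HOL-Complex_Analysis.Complex_Analysis"
begin

text \<open>Put f(\<zeta>) = \<zeta>^(n-k) (1 - \<zeta> w)^k, so that X^{n,k} = f^(k-1) / k!. The Leibniz rule turns
f^(k) / k! into the sum defining Z^{n,k} (a Rodrigues formula); that sum is invariant, up to the
sign (-1)^n, under k \<mapsto> n - k together with z \<leftrightarrow> w, so the formula also covers the reflected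
branch k > n/2. This gives the z-derivative. Splitting (1 - \<zeta> w)^k = (1 - \<zeta> w)^(k-1) - w \<zeta> (1 - \<zeta> w)^(k-1)
gives the recurrence, and the w-derivative of f is -k \<zeta>^(n-k+1) (1 - \<zeta> w)^(k-1), which gives
the w-derivative once it is moved past the \<zeta>-derivatives. Finally, for |t| = 1 the point t is a
zero of order k of f when w = cnj t, so f^(k-1) vanishes there.\<close>

lemma fact_mult_choose_Suc:
  "fact m * (p choose m) * (p - m) = fact (Suc m) * (p choose Suc m)"
proof -
  have "(p - m) * (p choose m) = Suc m * (p choose Suc m)"
    by (simp only: binomial_absorb_comp binomial_absorption)
  then show ?thesis
    by (simp add: fact_Suc algebra_simps)
qed

lemma higher_deriv_affine_power:
  fixes a b z :: complex
  shows "(deriv ^^ m) (\<lambda>\<zeta>. (a * \<zeta> + b) ^ p) z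
           = of_nat (fact m * (p choose m)) * a ^ m * (a * z + b) ^ (p - m)"
proof (induction m arbitrary: z)
  case 0
  show ?case by simp
next
  case (Suc m)
  have "(deriv ^^ Suc m) (\<lambda>\<zeta>. (a * \<zeta> + b) ^ p) z
          = deriv (\<lambda>\<zeta>. of_nat (fact m * (p choose m)) * a ^ m * (a * \<zeta> + b) ^ (p - m)) z"
    by (simp only: funpow.simps o_apply Suc.IH[abs_def])
  also have "\<dots> = of_nat (fact m * (p choose m) * (p - m)) * a ^ Suc m * (a * z + b) ^ (p - Suc m)"
    by (rule DERIV_imp_deriv) (auto intro!: derivative_eq_intros simp: mult_ac)
  finally show ?case
    by (simp only: fact_mult_choose_Suc)
qed

lemma higher_deriv_monomial_sum:
  fixes z :: complex
  shows "(deriv ^^ m) (\<lambda>\<zeta>. \<Sum>j\<in>J. c j * \<zeta> ^ p j) z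
           = (\<Sum>j\<in>J. c j * of_nat (fact m * (p j choose m)) * z ^ (p j - m))"
proof (induction m arbitrary: z)
  case 0
  show ?case by simp
next
  case (Suc m)
  have "(deriv ^^ Suc m) (\<lambda>\<zeta>. \<Sum>j\<in>J. c j * \<zeta> ^ p j) z
          = deriv (\<lambda>\<zeta>. \<Sum>j\<in>J. c j * of_nat (fact m * (p j choose m)) * \<zeta> ^ (p j - m)) z"
    by (simp only: funpow.simps o_apply Suc.IH[abs_def])
  also have "\<dots> = (\<Sum>j\<in>J. c j * of_nat (fact m * (p j choose m) * (p j - m)) * z ^ (p j - Suc m))"
    by (rule DERIV_imp_deriv) (auto intro!: derivative_eq_intros sum.cong simp: mult_ac)
  finally show ?case
    by (simp only: fact_mult_choose_Suc)
qed

text \<open>For functions polynomial in \<zeta>, both sides are explicit, so the parameter derivative commutes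
with the \<zeta>-derivatives without any theorem on mixed partial derivatives.\<close>

lemma has_field_derivative_higher_deriv_parametric_polynomial:
  fixes F :: "complex \<Rightarrow> complex \<Rightarrow> complex"
  assumes F: "\<And>\<omega> \<zeta>. F \<omega> \<zeta> = (\<Sum>j\<in>J. a j \<omega> * \<zeta> ^ p j)"
    and a: "\<And>j. j \<in> J \<Longrightarrow> a j field_differentiable at w"
    and G: "\<And>\<zeta>. ((\<lambda>\<omega>. F \<omega> \<zeta>) has_field_derivative G \<zeta>) (at w)"
  shows "((\<lambda>\<omega>. (deriv ^^ m) (F \<omega>) z) has_field_derivative (deriv ^^ m) G z) (at w)"
proof -
  have a': "j \<in> J \<Longrightarrow> (a j has_field_derivative deriv (a j) w) (at w)" for j
    using a DERIV_deriv_iff_field_differentiable by blast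
  have "((\<lambda>\<omega>. F \<omega> \<zeta>) has_field_derivative (\<Sum>j\<in>J. deriv (a j) w * \<zeta> ^ p j)) (at w)" for \<zeta>
    unfolding F by (auto intro!: derivative_eq_intros a')
  then have G_eq: "G = (\<lambda>\<zeta>. \<Sum>j\<in>J. deriv (a j) w * \<zeta> ^ p j)"
    using G DERIV_unique by blast
  have F_eq: "F = (\<lambda>\<omega> \<zeta>. \<Sum>j\<in>J. a j \<omega> * \<zeta> ^ p j)"
    using F by blast
  show ?thesis
    unfolding F_eq G_eq higher_deriv_monomial_sum by (auto intro!: derivative_eq_intros a')
qed

lemma higher_deriv_monomial:
  fixes z :: complex
  shows "(deriv ^^ m) (\<lambda>\<zeta>. \<zeta> ^ p) z = of_nat (fact m * (p choose m)) * z ^ (p - m)"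
  using higher_deriv_affine_power[of m 1 0 p z] by simp

lemma higher_deriv_mult_affine_power_eq_0:
  fixes h :: "complex \<Rightarrow> complex"
  assumes "h analytic_on {z}" and "a * z + b = 0" and "m < k"
  shows "(deriv ^^ m) (\<lambda>\<zeta>. h \<zeta> * (a * \<zeta> + b) ^ k) z = 0"
proof -
  have "(deriv ^^ m) (\<lambda>\<zeta>. h \<zeta> * (a * \<zeta> + b) ^ k) z
          = (\<Sum>i = 0..m. of_nat (m choose i) * (deriv ^^ i) h z
               * (deriv ^^ (m - i)) (\<lambda>\<zeta>. (a * \<zeta> + b) ^ k) z)"
    using assms(1) by (intro higher_deriv_mult_at analytic_intros)
  also have "\<dots> = 0"
    using assms(2,3) by (auto simp: higher_deriv_affine_power intro!: sum.neutral)
  finally show ?thesis .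
qed

lemma one_minus_mult_eq_affine: "(1 - \<zeta> * w :: complex) = - w * \<zeta> + 1"
  by (simp add: algebra_simps)

lemma monomial_mult_one_minus_power_eq_sum:
  fixes \<zeta> \<omega> :: complex
  shows "\<zeta> ^ p * (1 - \<zeta> * \<omega>) ^ k = (\<Sum>j\<le>k. of_nat (k choose j) * (- \<omega>) ^ j * \<zeta> ^ (p + j))"
proof -
  have "(1 - \<zeta> * \<omega>) ^ k = (\<Sum>j\<le>k. of_nat (k choose j) * (- \<omega> * \<zeta>) ^ j * 1 ^ (k - j))"
    unfolding binomial_ring[symmetric] by (simp add: algebra_simps)
  also have "\<dots> = (\<Sum>j\<le>k. of_nat (k choose j) * (- \<omega>) ^ j * \<zeta> ^ j)"
    by (simp only: power_mult_distrib power_one mult_1_right mult.assoc)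
  finally show ?thesis
    by (simp add: sum_distrib_left power_add mult_ac)
qed

lemma zernike_low_rodrigues:
  assumes "k \<le> n"
  shows "(deriv ^^ k) (\<lambda>\<zeta>. \<zeta> ^ (n - k) * (1 - \<zeta> * w) ^ k) z = fact k * zernike_low n k z w"
proof -
  have "(deriv ^^ k) (\<lambda>\<zeta>. \<zeta> ^ (n - k) * (1 - \<zeta> * w) ^ k) z
          = (\<Sum>i = 0..k. of_nat (k choose i) * (deriv ^^ i) (\<lambda>\<zeta>. \<zeta> ^ (n - k)) z
               * (deriv ^^ (k - i)) (\<lambda>\<zeta>. (- w * \<zeta> + 1) ^ k) z)"
    unfolding one_minus_mult_eq_affine by (intro higher_deriv_mult_at analytic_intros)
  also have "\<dots> = (\<Sum>i = 0..k. fact k * (of_nat (k choose i) * of_nat ((n - k) choose i)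
                     * z ^ (n - k - i) * (1 - z * w) ^ i * (- w) ^ (k - i)))"
  proof (intro sum.cong refl)
    fix i assume "i \<in> {0..k}"
    then have i: "i \<le> k" by simp
    then have k_minus: "k - (k - i) = i" and choose_sym: "k choose (k - i) = k choose i"
      using binomial_symmetric[OF i] by simp_all
    have "of_nat (fact i * fact (k - i) * (k choose i)) = (of_nat (fact k) :: complex)"
      by (simp only: binomial_fact_lemma[OF i])
    then have fact_k: "fact i * fact (k - i) * of_nat (k choose i) = (fact k :: complex)"
      by (simp only: of_nat_mult of_nat_fact)
    have "of_nat (k choose i) * (deriv ^^ i) (\<lambda>\<zeta>. \<zeta> ^ (n - k)) z
            * (deriv ^^ (k - i)) (\<lambda>\<zeta>. (- w * \<zeta> + 1) ^ k) z
          = (fact i * fact (k - i) * of_nat (k choose i)) * (of_nat (k choose i)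
              * of_nat ((n - k) choose i) * z ^ (n - k - i) * (1 - z * w) ^ i * (- w) ^ (k - i))"
      by (simp only: higher_deriv_monomial higher_deriv_affine_power k_minus choose_sym
          one_minus_mult_eq_affine of_nat_mult of_nat_fact) (simp only: mult_ac)
    then show "of_nat (k choose i) * (deriv ^^ i) (\<lambda>\<zeta>. \<zeta> ^ (n - k)) z
                 * (deriv ^^ (k - i)) (\<lambda>\<zeta>. (- w * \<zeta> + 1) ^ k) z
               = fact k * (of_nat (k choose i) * of_nat ((n - k) choose i)
                 * z ^ (n - k - i) * (1 - z * w) ^ i * (- w) ^ (k - i))"
      by (simp only: fact_k)
  qed
  also have "\<dots> = fact k * zernike_low n k z w"
    by (simp only: zernike_low_def sum_distrib_left)
  finally show ?thesis .
qed

lemma zernike_low_eq_sum_min: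
  "zernike_low n k z w = (\<Sum>s = 0..min k (n - k). of_nat (k choose s) * of_nat ((n - k) choose s)
        * z ^ (n - k - s) * (1 - z * w) ^ s * (- w) ^ (k - s))"
  unfolding zernike_low_def by (rule sum.mono_neutral_right) auto

lemma zernike_low_swap:
  assumes "k \<le> n"
  shows "zernike_low n k z w = (-1) ^ n * zernike_low n (n - k) w z"
proof -
  have sign: "(-1 :: complex) ^ n * (-1) ^ (n - k - s) = (-1) ^ (k - s)" if "s \<le> k" and "s \<le> n - k" for s
  proof -
    have "n + (n - k - s) = (k - s) + 2 * (n - k)"
      using assms that by arith
    then have "(-1 :: complex) ^ n * (-1) ^ (n - k - s) = (-1) ^ (k - s) * ((-1) ^ 2) ^ (n - k)"
      by (simp only: power_add [symmetric] power_mult [symmetric])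
    then show ?thesis
      by simp
  qed
  have n_minus: "n - (n - k) = k"
    using assms by simp
  show ?thesis
    unfolding zernike_low_eq_sum_min sum_distrib_left n_minus min.commute[of "n - k" k]
  proof (intro sum.cong refl)
    fix s assume "s \<in> {0..min k (n - k)}"
    then have "s \<le> k" and "s \<le> n - k" by auto
    then show "of_nat (k choose s) * of_nat ((n - k) choose s)
                 * z ^ (n - k - s) * (1 - z * w) ^ s * (- w) ^ (k - s)
               = (-1) ^ n * (of_nat ((n - k) choose s) * of_nat (k choose s)
                 * w ^ (k - s) * (1 - w * z) ^ s * (- z) ^ (n - k - s))"
      by (simp only: power_minus[of w "k - s"] power_minus[of z "n - k - s"] mult.commute[of w z]
          flip: sign) (simp only: mult_ac)
  qed
qed

lemma zernike_eq_zernike_low: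
  assumes "k \<le> n"
  shows "zernike n k z w = zernike_low n k z w"
  using zernike_low_swap[OF assms] by (simp add: zernike_def)

lemma zernike_rodrigues:
  assumes "k \<le> n"
  shows "(deriv ^^ k) (\<lambda>\<zeta>. \<zeta> ^ (n - k) * (1 - \<zeta> * w) ^ k) z = fact k * zernike n k z w"
  using zernike_low_rodrigues[OF assms] zernike_eq_zernike_low[OF assms] by simp

lemma deriv_zernikeX_z:
  assumes "0 < k" and "k \<le> n"
  shows "deriv (\<lambda>\<zeta>. zernikeX n k \<zeta> w) z = zernike n k z w"
proof -
  define f where "f = (\<lambda>\<zeta>. \<zeta> ^ (n - k) * (1 - \<zeta> * w) ^ k)"
  have "f holomorphic_on UNIV"
    unfolding f_def by (intro holomorphic_intros)
  then have "((deriv ^^ (k - 1)) f has_field_derivative (deriv ^^ k) f z) (at z)"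
    using has_field_derivative_higher_deriv[of f UNIV z "k - 1"] assms(1) by simp
  then have "((\<lambda>\<zeta>. zernikeX n k \<zeta> w) has_field_derivative (deriv ^^ k) f z / fact k) (at z)"
    unfolding zernikeX_def f_def[symmetric] of_nat_fact by (rule DERIV_cdivide)
  then show ?thesis
    unfolding f_def zernike_rodrigues[OF assms(2)] by (simp add: DERIV_imp_deriv)
qed

lemma zernikeX_eq_zernike_diff:
  assumes "0 < k" and "k \<le> n"
  shows "zernikeX n k z w = (zernike (n - 1) (k - 1) z w - w * zernike n (k - 1) z w) / of_nat k"
proof -
  obtain m where k: "k = Suc m"
    using assms(1) gr0_implies_Suc by blast
  define g1 where "g1 = (\<lambda>\<zeta>. \<zeta> ^ (n - 1 - m) * (1 - \<zeta> * w) ^ m)"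
  define g2 where "g2 = (\<lambda>\<zeta>. \<zeta> ^ (n - m) * (1 - \<zeta> * w) ^ m)"
  have "n - m = Suc (n - 1 - m)"
    using assms(2) k by simp
  then have split: "(\<lambda>\<zeta>. \<zeta> ^ (n - k) * (1 - \<zeta> * w) ^ k) = (\<lambda>\<zeta>. g1 \<zeta> - w * g2 \<zeta>)"
    unfolding g1_def g2_def k by (auto simp: algebra_simps)
  have "zernikeX n k z w = (deriv ^^ m) (\<lambda>\<zeta>. g1 \<zeta> - w * g2 \<zeta>) z / fact k"
    using k unfolding zernikeX_def split by (simp only: diff_Suc_1 of_nat_fact)
  also have "(deriv ^^ m) (\<lambda>\<zeta>. g1 \<zeta> - w * g2 \<zeta>) z = (deriv ^^ m) g1 z - w * (deriv ^^ m) g2 z"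
    unfolding g1_def g2_def by (simp add: higher_deriv_diff_at higher_deriv_cmult' analytic_intros)
  also have "\<dots> = fact m * (zernike (n - 1) m z w - w * zernike n m z w)"
    using zernike_rodrigues[of m "n - 1" w z] zernike_rodrigues[of m n w z] assms k
    unfolding g1_def g2_def by (simp add: algebra_simps)
  finally show ?thesis
    using k by (simp add: fact_Suc)
qed

lemma zernikeX_unit_circle:
  assumes "0 < k" and "cmod t = 1"
  shows "zernikeX n k t (cnj t) = 0"
proof -
  have "- cnj t * t + 1 = 0"
    using complex_norm_square[of t] assms(2) by (simp add: mult.commute)
  then have "(deriv ^^ (k - 1)) (\<lambda>\<zeta>. \<zeta> ^ (n - k) * (- cnj t * \<zeta> + 1) ^ k) t = 0"
    using assms(1) by (intro higher_deriv_mult_affine_power_eq_0 analytic_intros) auto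
  then show ?thesis
    unfolding zernikeX_def one_minus_mult_eq_affine by simp
qed

lemma deriv_zernikeX_w:
  assumes "0 < k" and "k \<le> n"
  shows "deriv (\<lambda>\<omega>. zernikeX n k z \<omega>) w = - zernike n (k - 1) z w"
proof -
  obtain m where k: "k = Suc m"
    using assms(1) gr0_implies_Suc by blast
  define F where "F = (\<lambda>\<omega> \<zeta> :: complex. \<zeta> ^ (n - k) * (1 - \<zeta> * \<omega>) ^ k)"
  define G where "G = (\<lambda>\<zeta>. - of_nat k * (\<zeta> ^ (n - m) * (1 - \<zeta> * w) ^ m))"
  have F_poly: "F \<omega> \<zeta> = (\<Sum>j\<le>k. of_nat (k choose j) * (- \<omega>) ^ j * \<zeta> ^ (n - k + j))" for \<omega> \<zeta>
    unfolding F_def by (rule monomial_mult_one_minus_power_eq_sum)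
  have exps: "n - m = Suc (n - k)" "k - Suc 0 = m"
    using assms(2) k by simp_all
  have G_deriv: "((\<lambda>\<omega>. F \<omega> \<zeta>) has_field_derivative G \<zeta>) (at w)" for \<zeta>
    unfolding F_def G_def by (auto intro!: derivative_eq_intros simp: exps mult_ac)
  have "((\<lambda>\<omega>. (deriv ^^ m) (F \<omega>) z) has_field_derivative (deriv ^^ m) G z) (at w)"
    by (rule has_field_derivative_higher_deriv_parametric_polynomial[OF F_poly _ G_deriv])
      (auto intro!: holomorphic_on_imp_differentiable_at[of _ UNIV] holomorphic_intros)
  moreover have "(deriv ^^ m) G z = - of_nat k * (fact m * zernike n m z w)"
    unfolding G_def using assms k
    by (simp add: higher_deriv_cmult' analytic_intros zernike_rodrigues[of m n w z, symmetric])
  ultimately have "((\<lambda>\<omega>. (deriv ^^ m) (F \<omega>) z) has_field_derivative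
                     - of_nat k * (fact m * zernike n m z w)) (at w)"
    by simp
  then have "((\<lambda>\<omega>. (deriv ^^ m) (F \<omega>) z / fact k) has_field_derivative
               - of_nat k * (fact m * zernike n m z w) / fact k) (at w)"
    by (rule DERIV_cdivide)
  moreover have "(\<lambda>\<omega>. zernikeX n k z \<omega>) = (\<lambda>\<omega>. (deriv ^^ m) (F \<omega>) z / fact k)"
    using k unfolding zernikeX_def F_def by (simp only: diff_Suc_1 of_nat_fact)
  moreover have "- of_nat k * (fact m * zernike n m z w) / fact k = - zernike n m z w"
    unfolding k fact_Suc by (simp del: of_nat_Suc)
  ultimately show ?thesis
    using k by (simp add: DERIV_imp_deriv)
qed

theorem mainTheorem4:
  fixes n k :: nat
  assumes "1 \<le> n" and "1 \<le> k" and "k \<le> n"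
  shows "(\<forall>z w. deriv (\<lambda>\<zeta>. zernikeX n k \<zeta> w) z = zernike n k z w)
       \<and> (\<forall>z w. deriv (\<lambda>\<omega>. zernikeX n k z \<omega>) w = - zernike n (k - 1) z w)
       \<and> (\<forall>z w. zernikeX n k z w
              = (zernike (n - 1) (k - 1) z w - w * zernike n (k - 1) z w) / of_nat k)
       \<and> (\<forall>t. cmod t = 1 \<longrightarrow> zernikeX n k t (cnj t) = 0)"
proof -
  have k: "0 < k"
    using assms(2) by simp
  show ?thesis
    using deriv_zernikeX_z[OF k assms(3)] deriv_zernikeX_w[OF k assms(3)]
      zernikeX_eq_zernike_diff[OF k assms(3)] zernikeX_unit_circle[OF k]
    by blast
qed

end
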